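(* Let $G$ be a primitive strongly regular graph with parameters $(v,k,\lambda,\mu)$, and let $s$ be its smallest adjacency eigenvalue. Then $k/|s| > v^{1/6}/2$.
   Context: A graph is strongly regular with parameters $(v,k,\lambda,\mu)$ if it is a $k$-regular graph on $v$ vertices such that each edge lies in exactly $\lambda$ triangles and any two distinct non-adjacent vertices have exactly $\mu$ common neighbours; complete and edgeless graphs are excluded. A strongly regular graph is primitive if both it and its complement are connected. A connected strongly regular graph has, besides $k$, exactly two distinct adjacency eigenvalues $r>0$ and $s<-1$. *)

theory Defs
  imports "HOL-Analysis.Analysis"
begin

definition simple_graph :: "('n \<Rightarrow> 'n \<Rightarrow> bool) \<Rightarrow> bool" where
  "simple_graph E \<longleftrightarrow> (\<forall>x y. E x y \<longrightarrow> E y x) \<and> (\<forall>x. \<not> E x x)"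

definition nbrs :: "('n \<Rightarrow> 'n \<Rightarrow> bool) \<Rightarrow> 'n \<Rightarrow> 'n set" where
  "nbrs E x = {y. E x y}"

text \<open>Strongly regular with parameters (v,k,lambda,mu); complete and edgeless graphs excluded.\<close>
definition strongly_regular ::
  "('n::finite \<Rightarrow> 'n \<Rightarrow> bool) \<Rightarrow> nat \<Rightarrow> nat \<Rightarrow> nat \<Rightarrow> nat \<Rightarrow> bool" where
  "strongly_regular E v k l m \<longleftrightarrow>
     simple_graph E \<and> CARD('n) = v \<and>
     (\<forall>x. card (nbrs E x) = k) \<and>
     (\<forall>x y. E x y \<longrightarrow> card (nbrs E x \<inter> nbrs E y) = l) \<and>
     (\<forall>x y. x \<noteq> y \<and> \<not> E x y \<longrightarrow> card (nbrs E x \<inter> nbrs E y) = m) \<and>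
     (\<exists>x y. E x y) \<and> (\<exists>x y. x \<noteq> y \<and> \<not> E x y)"

definition connected_graph :: "('n \<Rightarrow> 'n \<Rightarrow> bool) \<Rightarrow> bool" where
  "connected_graph E \<longleftrightarrow> (\<forall>x y. E\<^sup>*\<^sup>* x y)"

definition complement_graph :: "('n \<Rightarrow> 'n \<Rightarrow> bool) \<Rightarrow> 'n \<Rightarrow> 'n \<Rightarrow> bool" where
  "complement_graph E x y \<longleftrightarrow> x \<noteq> y \<and> \<not> E x y"

definition primitive_srg ::
  "('n::finite \<Rightarrow> 'n \<Rightarrow> bool) \<Rightarrow> nat \<Rightarrow> nat \<Rightarrow> nat \<Rightarrow> nat \<Rightarrow> bool" where
  "primitive_srg E v k l m \<longleftrightarrow> strongly_regular E v k l m \<and>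
     connected_graph E \<and> connected_graph (complement_graph E)"

definition adj_matrix :: "('n::finite \<Rightarrow> 'n \<Rightarrow> bool) \<Rightarrow> real^'n^'n" where
  "adj_matrix E = (\<chi> i j. if E i j then 1 else 0)"

definition is_eigenvalue :: "real^'n^'n \<Rightarrow> real \<Rightarrow> bool" where
  "is_eigenvalue A t \<longleftrightarrow> (\<exists>x. x \<noteq> 0 \<and> A *v x = t *\<^sub>R x)"

definition smallest_eigenvalue :: "real^'n^'n \<Rightarrow> real \<Rightarrow> bool" where
  "smallest_eigenvalue A s \<longleftrightarrow> is_eigenvalue A s \<and> (\<forall>t. is_eigenvalue A t \<longrightarrow> s \<le> t)"

end

theory Submission
  imports Defs
begin

text \<open>
Write the smallest eigenvalue as \<open>s = -x\<close>. The restricted eigenvalues \<open>r > 0 > -x\<close> are the roots of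
\<open>t\<^sup>2 - (\<lambda> - \<mu>) t - (k - \<mu>)\<close>, and \<open>(r I + c J - A) / (r + x)\<close>, with \<open>c = (k - r) / v\<close>, is the orthogonal
projection onto the eigenspace of \<open>-x\<close>. Its trace is the multiplicity \<open>g = (k + (v - 1) r) / (r + x)\<close>,
and its off-diagonal entries take only two values different from the diagonal ones. Writing the
projection as the Gram matrix of an orthonormal basis \<open>B\<close> of its column space, the unit vectors lie
in the span of the entrywise products of the vectors in \<open>B \<union> {1}\<close>, whence the absolute bound
\<open>v \<le> g\<^sup>2 + g + 1\<close>. Combining it with \<open>r x = k - \<mu>\<close>, the identity \<open>k (k - 1 - \<lambda>) = \<mu> (v - 1 - k)\<close> and
an elementary case distinction on the sizes of \<open>x\<^sup>2\<close> and \<open>v\<close> gives \<open>v x\<^sup>6 < 64 k\<^sup>6\<close>.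
\<close>

definition adj :: "('n \<Rightarrow> 'n \<Rightarrow> bool) \<Rightarrow> 'n \<Rightarrow> 'n \<Rightarrow> real" where
  "adj E i j = of_bool (E i j)"

definition adj_apply :: "('n::finite \<Rightarrow> 'n \<Rightarrow> bool) \<Rightarrow> ('n \<Rightarrow> real) \<Rightarrow> 'n \<Rightarrow> real" where
  "adj_apply E w i = (\<Sum>j\<in>UNIV. adj E i j * w j)"

lemma srg_adj_sym: "strongly_regular E v k l m \<Longrightarrow> E x y \<Longrightarrow> E y x"
  by (auto simp: strongly_regular_def simple_graph_def)

lemma srg_not_adj_self: "strongly_regular E v k l m \<Longrightarrow> \<not> E x x"
  by (auto simp: strongly_regular_def simple_graph_def)

lemma srg_degree_pos:
  assumes sr: "strongly_regular E v k l m"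
  shows "0 < k"
proof -
  obtain a b where "E a b" using sr by (auto simp: strongly_regular_def)
  hence "nbrs E a \<noteq> {}" by (auto simp: nbrs_def)
  thus ?thesis using sr by (auto simp: strongly_regular_def)
qed

lemma srg_degree_add_two_le_order:
  assumes sr: "strongly_regular E v k l m"
  shows "k + 2 \<le> v"
proof -
  obtain a b where ab: "a \<noteq> b" "\<not> E a b" using sr by (auto simp: strongly_regular_def)
  have "a \<notin> nbrs E a" "b \<notin> nbrs E a" using ab srg_not_adj_self[OF sr] by (auto simp: nbrs_def)
  hence "card (insert a (insert b (nbrs E a))) = k + 2"
    using ab sr by (simp add: strongly_regular_def)
  moreover have "card (insert a (insert b (nbrs E a))) \<le> CARD('a)" by (rule card_mono) auto
  ultimately show ?thesis using sr by (simp add: strongly_regular_def)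
qed

lemma srg_mu_le_degree:
  assumes sr: "strongly_regular E v k l m"
  shows "m \<le> k"
proof -
  obtain a b where "a \<noteq> b" "\<not> E a b" using sr by (auto simp: strongly_regular_def)
  hence "m = card (nbrs E a \<inter> nbrs E b)" using sr by (simp add: strongly_regular_def)
  also have "\<dots> \<le> card (nbrs E a)" by (intro card_mono) auto
  finally show ?thesis using sr by (simp add: strongly_regular_def)
qed

lemma primitive_srg_mu_pos:
  assumes pr: "primitive_srg E v k l m"
  shows "0 < m"
proof (rule ccontr)
  assume "\<not> 0 < m"
  have sr: "strongly_regular E v k l m" using pr by (simp add: primitive_srg_def)
  obtain a b where ab: "a \<noteq> b" "\<not> E a b" using sr by (auto simp: strongly_regular_def)
  \<comment> \<open>with \<open>\<mu> = 0\<close> the closed neighbourhood of \<open>a\<close> is closed under adjacency\<close>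
  have step: "z = a \<or> E a z" if "y = a \<or> E a y" "E y z" for y z
  proof (rule ccontr)
    assume nz: "\<not> (z = a \<or> E a z)"
    hence "a \<noteq> z" "\<not> E a z" by auto
    hence "card (nbrs E a \<inter> nbrs E z) = 0"
      using sr \<open>\<not> 0 < m\<close> by (simp add: strongly_regular_def)
    hence "nbrs E a \<inter> nbrs E z = {}" by simp
    moreover have "E a y" "E z y" using that nz srg_adj_sym[OF sr] by auto
    ultimately show False by (auto simp: nbrs_def)
  qed
  have "E\<^sup>*\<^sup>* a b \<Longrightarrow> b = a \<or> E a b"
    by (induction rule: rtranclp_induct) (use step in blast)+
  thus False using pr ab by (auto simp: primitive_srg_def connected_graph_def)
qed

lemma primitive_srg_mu_less_degree:
  assumes pr: "primitive_srg E v k l m"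
  shows "m < k"
proof (rule ccontr)
  assume "\<not> m < k"
  have sr: "strongly_regular E v k l m" using pr by (simp add: primitive_srg_def)
  hence mk: "m = k" using srg_mu_le_degree \<open>\<not> m < k\<close> by force
  \<comment> \<open>with \<open>\<mu> = k\<close> non-adjacent vertices have equal neighbourhoods\<close>
  have same: "nbrs E y \<subseteq> nbrs E z" if "y \<noteq> z" "\<not> E y z" for y z
  proof -
    have "card (nbrs E y \<inter> nbrs E z) = card (nbrs E y)"
      using sr that mk by (simp add: strongly_regular_def)
    hence "nbrs E y \<inter> nbrs E z = nbrs E y" by (intro card_subset_eq) auto
    thus ?thesis by blast
  qed
  have step: "nbrs E y = nbrs E z" if "complement_graph E y z" for y z
    using that same[of y z] same[of z y] srg_adj_sym[OF sr]
    by (auto simp: complement_graph_def)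
  obtain a b where ab: "E a b" using sr by (auto simp: strongly_regular_def)
  have "(complement_graph E)\<^sup>*\<^sup>* a b \<Longrightarrow> nbrs E b = nbrs E a"
    by (induction rule: rtranclp_induct) (use step in auto)
  hence "nbrs E b = nbrs E a" using pr by (simp add: primitive_srg_def connected_graph_def)
  thus False using ab srg_not_adj_self[OF sr, of b] by (auto simp: nbrs_def)
qed

lemma srg_row_sum:
  assumes sr: "strongly_regular E v k l m"
  shows "(\<Sum>z\<in>UNIV. adj E i z) = real k"
proof -
  have "(\<Sum>z\<in>UNIV. adj E i z) = (\<Sum>z\<in>UNIV. of_bool (z \<in> nbrs E i))"
    by (simp add: adj_def nbrs_def)
  thus ?thesis using sr by (simp add: strongly_regular_def)
qed

lemma srg_column_sum:
  assumes sr: "strongly_regular E v k l m"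
  shows "(\<Sum>z\<in>UNIV. adj E z i) = real k"
proof -
  have "(\<Sum>z\<in>UNIV. adj E z i) = (\<Sum>z\<in>UNIV. adj E i z)"
    using srg_adj_sym[OF sr] by (intro sum.cong) (auto simp: adj_def)
  thus ?thesis using srg_row_sum[OF sr] by simp
qed

lemma srg_adj_square:
  assumes sr: "strongly_regular E v k l m"
  shows "(\<Sum>z\<in>UNIV. adj E i z * adj E z j) =
     real m + (real k - real m) * of_bool (i = j) + (real l - real m) * adj E i j"
proof -
  have "(\<Sum>z\<in>UNIV. adj E i z * adj E z j) = (\<Sum>z\<in>UNIV. of_bool (z \<in> nbrs E i \<inter> nbrs E j))"
    using srg_adj_sym[OF sr] by (intro sum.cong) (auto simp: adj_def nbrs_def)
  also have "\<dots> = real (card (nbrs E i \<inter> nbrs E j))" by (simp del: Int_iff)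
  finally show ?thesis
    using sr srg_not_adj_self[OF sr, of i] by (cases "i = j"; cases "E i j") (auto simp: strongly_regular_def adj_def)
qed

lemma adj_apply_twice:
  assumes sr: "strongly_regular E v k l m"
  shows "adj_apply E (adj_apply E w) i = (real k - real m) * w i + (real l - real m) * adj_apply E w i
           + real m * (\<Sum>z\<in>UNIV. w z)"
proof -
  have "adj_apply E (adj_apply E w) i = (\<Sum>j\<in>UNIV. \<Sum>z\<in>UNIV. adj E i j * (adj E j z * w z))"
    by (simp add: adj_apply_def sum_distrib_left)
  also have "\<dots> = (\<Sum>z\<in>UNIV. (\<Sum>j\<in>UNIV. adj E i j * adj E j z) * w z)"
    by (subst sum.swap) (simp add: sum_distrib_right mult.assoc)
  also have "\<dots> = (\<Sum>z\<in>UNIV. real m * w z + (real k - real m) * (of_bool (i = z) * w z)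
       + (real l - real m) * (adj E i z * w z))"
    by (intro sum.cong refl, subst srg_adj_square[OF sr]) (simp add: algebra_simps)
  also have "\<dots> = real m * (\<Sum>z\<in>UNIV. w z) + (real k - real m) * w i + (real l - real m) * adj_apply E w i"
    by (simp add: sum.distrib sum_distrib_left[symmetric] adj_apply_def)
  finally show ?thesis by simp
qed

lemma sum_adj_apply:
  assumes sr: "strongly_regular E v k l m"
  shows "(\<Sum>i\<in>UNIV. adj_apply E w i) = real k * (\<Sum>z\<in>UNIV. w z)"
proof -
  have "(\<Sum>i\<in>UNIV. adj_apply E w i) = (\<Sum>j\<in>UNIV. (\<Sum>i\<in>UNIV. adj E i j) * w j)"
    unfolding adj_apply_def by (subst sum.swap) (simp add: sum_distrib_right)
  thus ?thesis by (simp add: srg_column_sum[OF sr] sum_distrib_left)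
qed

lemma adj_apply_scale: "adj_apply E (\<lambda>i. t * w i) = (\<lambda>i. t * adj_apply E w i)"
  by (auto simp: adj_apply_def sum_distrib_left algebra_simps)

lemma srg_parameter_identity:
  assumes sr: "strongly_regular E v k l m"
  shows "(real k)^2 = real k + real l * real k + real m * (real v - 1 - real k)"
proof -
  have one: "adj_apply E (\<lambda>_. 1) = (\<lambda>_. real k)"
    using srg_row_sum[OF sr] by (auto simp: adj_apply_def)
  have "real k * real k = adj_apply E (adj_apply E (\<lambda>_. 1)) i" for i
    by (simp add: one adj_apply_def sum_distrib_right[symmetric] srg_row_sum[OF sr])
  also have "\<dots> i = (real k - real m) + (real l - real m) * real k + real m * real v" for i
    using adj_apply_twice[OF sr, of "\<lambda>_. 1" i] sr by (simp add: one strongly_regular_def)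
  finally show ?thesis by (simp add: power2_eq_square algebra_simps)
qed

lemma srg_eigenvalue_cases:
  assumes sr: "strongly_regular E v k l m"
    and eigen: "adj_apply E w = (\<lambda>i. t * w i)" and "w i0 \<noteq> 0"
  shows "t = real k \<or> t^2 = (real k - real m) + (real l - real m) * t"
proof (cases "t = real k")
  case False
  \<comment> \<open>an eigenvector for an eigenvalue other than \<open>k\<close> is orthogonal to the all-ones vector\<close>
  have "t * (\<Sum>z\<in>UNIV. w z) = real k * (\<Sum>z\<in>UNIV. w z)"
    using sum_adj_apply[OF sr, of w] eigen by (simp add: sum_distrib_left)
  hence "(\<Sum>z\<in>UNIV. w z) = 0" using False by simp
  hence "(t * t) * w i0 = ((real k - real m) + (real l - real m) * t) * w i0"
    using adj_apply_twice[OF sr, of w i0] eigen by (simp add: adj_apply_scale algebra_simps)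
  thus ?thesis using \<open>w i0 \<noteq> 0\<close> by (simp add: power2_eq_square)
qed simp

lemma srg_eigenvector_of_root:
  assumes sr: "strongly_regular E v k l m"
    and pq: "p + q = real l - real m" "p * q = real m - real k" and "p \<noteq> 0"
  obtains w i0 where "w i0 \<noteq> 0" "adj_apply E w = (\<lambda>i. q * w i)"
proof -
  obtain a b where ab: "a \<noteq> b" "\<not> E a b" using sr by (auto simp: strongly_regular_def)
  \<comment> \<open>\<open>(A - p I)(e\<^sub>a - e\<^sub>b)\<close> is killed by \<open>A - q I\<close>, and its \<open>a\<close>-entry is \<open>-p\<close>\<close>
  define z :: "'a \<Rightarrow> real" where "z i = of_bool (i = a) - of_bool (i = b)" for i
  define y where "y i = adj_apply E z i - p * z i" for i
  have sum_z: "(\<Sum>i\<in>UNIV. z i) = 0" by (simp add: z_def sum_subtractf)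
  have y_apply: "adj_apply E y i = adj_apply E (adj_apply E z) i - p * adj_apply E z i" for i
    by (simp add: y_def adj_apply_def sum_subtractf sum_distrib_left algebra_simps)
  have "adj_apply E y i = (real k - real m) * z i + (real l - real m - p) * adj_apply E z i" for i
    using y_apply[of i] adj_apply_twice[OF sr, of z i] sum_z by (simp add: algebra_simps)
  moreover have "real k - real m = - (p * q)" "real l - real m - p = q" using pq by simp_all
  ultimately have "adj_apply E y i = q * y i" for i by (simp add: y_def algebra_simps)
  hence "adj_apply E y = (\<lambda>i. q * y i)" by auto
  moreover have "y a = - p"
    using ab srg_not_adj_self[OF sr, of a] by (simp add: y_def z_def adj_apply_def adj_def sum_subtractf)
  ultimately show ?thesis using that[of y a] \<open>p \<noteq> 0\<close> by simp
qed

lemma is_eigenvalue_adj_matrix_iff: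
  "is_eigenvalue (adj_matrix E) t \<longleftrightarrow> (\<exists>w i0. w i0 \<noteq> 0 \<and> adj_apply E w = (\<lambda>i. t * w i))"
proof -
  have entry: "(adj_matrix E *v x) $ i = adj_apply E (\<lambda>j. x $ j) i" for x i
    by (simp add: adj_matrix_def matrix_vector_mult_def adj_apply_def adj_def of_bool_def)
  show ?thesis
  proof
    assume "is_eigenvalue (adj_matrix E) t"
    then obtain x where "x \<noteq> 0" "adj_matrix E *v x = t *\<^sub>R x" by (auto simp: is_eigenvalue_def)
    thus "\<exists>w i0. w i0 \<noteq> 0 \<and> adj_apply E w = (\<lambda>i. t * w i)"
      by (intro exI[of _ "\<lambda>j. x $ j"]) (auto simp: vec_eq_iff entry[symmetric])
  next
    assume "\<exists>w i0. w i0 \<noteq> 0 \<and> adj_apply E w = (\<lambda>i. t * w i)"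
    then obtain w i0 where "w i0 \<noteq> 0" "adj_apply E w = (\<lambda>i. t * w i)" by blast
    thus "is_eigenvalue (adj_matrix E) t"
      unfolding is_eigenvalue_def by (intro exI[of _ "\<chi> i. w i"]) (auto simp: vec_eq_iff entry)
  qed
qed

lemma real_quadratic_roots_negative_product:
  fixes b c :: real
  assumes "c < 0"
  obtains p q where "p + q = b" "p * q = c" "p > 0" "q < 0"
proof -
  define d where "d = sqrt (b^2 - 4 * c)"
  have "\<bar>b\<bar> = sqrt (b^2)" by simp
  also have "\<dots> < d" unfolding d_def using assms by (subst real_sqrt_less_iff) simp
  finally have "\<bar>b\<bar> < d" .
  moreover have "b^2 - 4 * c \<ge> 0" using assms zero_le_power2[of b] by linarith
  hence "d^2 = b^2 - 4 * c" by (simp add: d_def)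
  ultimately show ?thesis
    by (intro that[of "(b + d) / 2" "(b - d) / 2"]) (auto simp: field_simps power2_eq_square)
qed

lemma primitive_srg_smallest_eigenvalue:
  assumes pr: "primitive_srg E v k l m" and s: "smallest_eigenvalue (adj_matrix E) s"
  obtains r where "r > 0" "s < 0" "r * s = real m - real k" "r + s = real l - real m"
proof -
  have sr: "strongly_regular E v k l m" using pr by (simp add: primitive_srg_def)
  have "real m - real k < 0" using primitive_srg_mu_less_degree[OF pr] by simp
  then obtain p q where pq: "p + q = real l - real m" "p * q = real m - real k" "p > 0" "q < 0"
    by (rule real_quadratic_roots_negative_product)
  obtain w i0 where "w i0 \<noteq> 0" "adj_apply E w = (\<lambda>i. q * w i)"
    using srg_eigenvector_of_root[OF sr pq(1,2)] pq(3) by auto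
  hence "s \<le> q" using s by (auto simp: smallest_eigenvalue_def is_eigenvalue_adj_matrix_iff)
  hence "s < 0" using pq by simp
  moreover obtain w i0 where "w i0 \<noteq> 0" "adj_apply E w = (\<lambda>i. s * w i)"
    using s by (auto simp: smallest_eigenvalue_def is_eigenvalue_adj_matrix_iff)
  ultimately have "s^2 = (real k - real m) + (real l - real m) * s"
    using srg_eigenvalue_cases[OF sr] by force
  hence "(real l - real m - s) * s = real m - real k"
    by (simp add: power2_eq_square algebra_simps)
  moreover from this have "real l - real m - s > 0"
    using \<open>s < 0\<close> \<open>real m - real k < 0\<close> by (smt (verit) mult_nonpos_nonpos)
  ultimately show ?thesis using that \<open>s < 0\<close> by auto
qed

lemma symmetric_idempotent_factorization:
  fixes P :: "'n::finite \<Rightarrow> 'n \<Rightarrow> real"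
  assumes sym: "\<And>i j. P i j = P j i"
    and idem: "\<And>i j. (\<Sum>z\<in>UNIV. P i z * P z j) = P i j"
  obtains B :: "(real^'n) set"
  where "finite B" "\<And>b b'. b \<in> B \<Longrightarrow> b' \<in> B \<Longrightarrow> b \<bullet> b' = of_bool (b = b')"
    "\<And>i j. P i j = (\<Sum>b\<in>B. b $ i * b $ j)"
proof -
  define p where "p i = (\<chi> j. P j i)" for i
  have p_inner: "p i \<bullet> p j = P i j" for i j
    using idem[of i j] sym by (simp add: p_def inner_vec_def)
  obtain B where B: "B \<subseteq> span (range p)" "pairwise orthogonal B" "\<And>x. x \<in> B \<Longrightarrow> norm x = 1"
    "independent B" "span B = span (range p)"
    using orthonormal_basis_subspace[OF subspace_span] by metis
  have "finite B" using B(4) by (rule finiteI_independent)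
  have orthonormal: "b \<bullet> b' = of_bool (b = b')" if "b \<in> B" "b' \<in> B" for b b'
    using B(2,3) that by (cases "b = b'") (auto simp: norm_eq_1 pairwise_def orthogonal_def)
  have expand: "y = (\<Sum>b\<in>B. (y \<bullet> b) *\<^sub>R b)" if y: "y \<in> span B" for y
  proof -
    obtain u where u: "y = (\<Sum>b\<in>B. u b *\<^sub>R b)" using y span_finite[OF \<open>finite B\<close>] by auto
    have "y \<bullet> b' = u b'" if "b' \<in> B" for b'
      using \<open>finite B\<close> that orthonormal by (simp add: u inner_sum_left if_distrib cong: sum.cong)
    thus ?thesis using u by (metis (no_types, lifting) sum.cong)
  qed
  \<comment> \<open>\<open>P\<close> acts as the identity on its column space\<close>
  have coord: "p i \<bullet> y = y $ i" if "y \<in> span (range p)" for i y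
    using that
  proof (induction rule: span_induct)
    case (step x)
    then obtain j where "x = p j" by auto
    thus ?case by (simp add: p_inner) (simp add: p_def sym)
  qed (auto simp: subspace_def inner_add_right)
  have "P i j = (\<Sum>b\<in>B. b $ i * b $ j)" for i j
  proof -
    have "p i \<in> span B" using B(5) by (simp add: span_base)
    hence "P i j = (\<Sum>b\<in>B. (p i \<bullet> b) * (b \<bullet> p j))"
      by (subst p_inner[symmetric], subst expand) (simp_all add: inner_sum_left)
    also have "\<dots> = (\<Sum>b\<in>B. b $ i * b $ j)"
      using B(1) coord by (intro sum.cong refl) (auto simp: inner_commute)
    finally show ?thesis .
  qed
  with \<open>finite B\<close> orthonormal show ?thesis using that by blast
qed

lemma two_valued_gram_card_bound:
  fixes B :: "(real^'n::finite) set" and P :: "'n \<Rightarrow> 'n \<Rightarrow> real"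
  assumes "finite B" and gram: "\<And>i j. P i j = (\<Sum>b\<in>B. b $ i * b $ j)"
    and off: "\<And>i j. i \<noteq> j \<Longrightarrow> (P i j - c1) * (P i j - c2) = 0"
    and diag: "\<And>i. (P i i - c1) * (P i i - c2) \<noteq> 0"
  shows "CARD('n) \<le> card B * card B + card B + 1"
proof -
  define T where "T = (\<lambda>q. \<chi> i. fst q $ i * snd q $ i) ` (B \<times> B) \<union> B \<union> {\<chi> i. 1}"
  have "finite T" using assms(1) by (simp add: T_def)
  have "card T \<le> card B * card B + card B + 1"
  proof -
    have "card T \<le> card ((\<lambda>q. \<chi> i. fst q $ i * snd q $ i) ` (B \<times> B) \<union> B) + card {(\<chi> i. 1) :: real^'n}"
      unfolding T_def by (rule card_Un_le)
    also have "\<dots> \<le> card ((\<lambda>q. \<chi> i. fst q $ i * snd q $ i) ` (B \<times> B)) + card B + 1"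
      using card_Un_le by simp
    also have "\<dots> \<le> card B * card B + card B + 1"
      using card_image_le[of "B \<times> B"] assms(1) by (simp add: card_cartesian_product)
    finally show ?thesis .
  qed
  have "axis j 1 \<in> span T" for j
  proof -
    define Y where "Y = (\<chi> i. (P i j - c1) * (P i j - c2))"
    have Y_expansion: "Y = (\<Sum>q\<in>B \<times> B. (fst q $ j * snd q $ j) *\<^sub>R (\<chi> i. fst q $ i * snd q $ i))
             - (c1 + c2) *\<^sub>R (\<Sum>b\<in>B. (b $ j) *\<^sub>R b) + (c1 * c2) *\<^sub>R (\<chi> i. 1)"
    proof (subst vec_eq_iff, intro allI)
      fix i
      have "(P i j)^2 = (\<Sum>q\<in>B \<times> B. (fst q $ j * snd q $ j) * (fst q $ i * snd q $ i))"
        by (simp add: gram power2_eq_square sum_product sum.cartesian_product algebra_simps case_prod_beta)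
      moreover have "(\<Sum>b\<in>B. b $ j * b $ i) = P i j" by (simp add: gram mult.commute)
      ultimately show "Y $ i = ((\<Sum>q\<in>B \<times> B. (fst q $ j * snd q $ j) *\<^sub>R (\<chi> i. fst q $ i * snd q $ i))
             - (c1 + c2) *\<^sub>R (\<Sum>b\<in>B. (b $ j) *\<^sub>R b) + (c1 * c2) *\<^sub>R (\<chi> i. 1)) $ i"
        by (simp add: Y_def algebra_simps power2_eq_square)
    qed
    have "Y \<in> span T"
      unfolding Y_expansion T_def by (intro span_add span_diff span_mul span_sum span_base) auto
    moreover have "Y = ((P j j - c1) * (P j j - c2)) *\<^sub>R axis j 1"
      using off by (auto simp: vec_eq_iff Y_def axis_def)
    ultimately show ?thesis using diag[of j] span_mul[of Y T "1 / ((P j j - c1) * (P j j - c2))"]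
      by simp
  qed
  hence "Basis \<subseteq> span T" by (auto simp: Basis_vec_def)
  hence "card (Basis :: (real^'n) set) \<le> card T"
    using independent_span_bound[OF \<open>finite T\<close> independent_Basis] by blast
  with \<open>card T \<le> _\<close> show ?thesis by simp
qed

lemma absolute_bound:
  fixes P :: "'n::finite \<Rightarrow> 'n \<Rightarrow> real"
  assumes sym: "\<And>i j. P i j = P j i"
    and idem: "\<And>i j. (\<Sum>z\<in>UNIV. P i z * P z j) = P i j"
    and off: "\<And>i j. i \<noteq> j \<Longrightarrow> (P i j - c1) * (P i j - c2) = 0"
    and diag: "\<And>i. (P i i - c1) * (P i i - c2) \<noteq> 0"
  shows "real CARD('n) \<le> (\<Sum>i\<in>UNIV. P i i)^2 + (\<Sum>i\<in>UNIV. P i i) + 1"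
proof -
  obtain B :: "(real^'n) set" where B: "finite B" "\<And>b b'. b \<in> B \<Longrightarrow> b' \<in> B \<Longrightarrow> b \<bullet> b' = of_bool (b = b')"
    "\<And>i j. P i j = (\<Sum>b\<in>B. b $ i * b $ j)"
    using symmetric_idempotent_factorization[OF sym idem] by blast
  have "(\<Sum>i\<in>UNIV. P i i) = (\<Sum>b\<in>B. b \<bullet> b)"
    by (simp add: B(3) inner_vec_def) (rule sum.swap)
  also have "\<dots> = real (card B)" using B(2) by simp
  finally have trace: "(\<Sum>i\<in>UNIV. P i i) = real (card B)" .
  have "CARD('n) \<le> card B * card B + card B + 1"
    by (rule two_valued_gram_card_bound[OF B(1,3) off diag])
  hence "real CARD('n) \<le> real (card B) * real (card B) + real (card B) + 1"
    by (metis of_nat_add of_nat_le_iff of_nat_mult of_nat_1)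
  thus ?thesis by (simp add: trace power2_eq_square)
qed

lemma srg_eigenprojection_idempotent:
  assumes sr: "strongly_regular E v k l m"
    and rx: "r * x = real k - real m" and rmx: "r - x = real l - real m"
  defines "c \<equiv> (real k - r) / real v"
  shows "(\<Sum>z\<in>UNIV. (r * of_bool (i = z) + c - adj E i z) * (r * of_bool (z = j) + c - adj E z j))
       = (r + x) * (r * of_bool (i = j) + c - adj E i j)"
proof -
  define Q where "Q i j = r * of_bool (i = j) + c - adj E i j" for i j
  have v: "real v > 0" using srg_degree_add_two_le_order[OF sr] by simp
  have vc: "real v * c = real k - r" using v by (simp add: c_def)
  have mc: "c * (x + real k) = real m"
  proof -
    have "real v * (c * (x + real k)) = (real k - r) * (x + real k)" using vc by simp
    also have "\<dots> = real v * real m"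
      using srg_parameter_identity[OF sr] rx rmx by (simp add: power2_eq_square) algebra
    finally show ?thesis using v by simp
  qed
  have column: "(\<Sum>z\<in>UNIV. Q z j) = r + real v * c - real k"
    using sr by (simp add: Q_def sum.distrib sum_subtractf srg_column_sum[OF sr] strongly_regular_def)
  have "(\<Sum>z\<in>UNIV. adj E i z * Q z j)
      = r * adj E i j + c * (\<Sum>z\<in>UNIV. adj E i z) - (\<Sum>z\<in>UNIV. adj E i z * adj E z j)"
    by (simp add: Q_def sum.distrib sum_subtractf algebra_simps flip: sum_distrib_left)
  also have "\<dots> = r * adj E i j + c * real k
        - (real m + (real k - real m) * of_bool (i = j) + (real l - real m) * adj E i j)"
    by (simp only: srg_row_sum[OF sr] srg_adj_square[OF sr])
  finally have adj_Q: "(\<Sum>z\<in>UNIV. adj E i z * Q z j) = r * adj E i j + c * real k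
        - (real m + (real k - real m) * of_bool (i = j) + (real l - real m) * adj E i j)" .
  have "(\<Sum>z\<in>UNIV. Q i z * Q z j) = r * Q i j + c * (\<Sum>z\<in>UNIV. Q z j) - (\<Sum>z\<in>UNIV. adj E i z * Q z j)"
    by (simp add: Q_def[of i] sum.distrib sum_subtractf sum_distrib_left[symmetric] algebra_simps)
  also have "\<dots> = (r + x) * Q i j"
    unfolding column adj_Q vc rx[symmetric] rmx[symmetric] unfolding mc[symmetric]
    by (simp add: Q_def algebra_simps)
  finally show ?thesis by (simp add: Q_def)
qed

lemma srg_eigenvalue_absolute_bound:
  assumes sr: "strongly_regular E v k l m" and "r > 0" "x > 0"
    and rx: "r * x = real k - real m" and rmx: "r - x = real l - real m"
  defines "g \<equiv> (real k + (real v - 1) * r) / (r + x)"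
  shows "real v \<le> g^2 + g + 1"
proof -
  define c where "c = (real k - r) / real v"
  define P where "P i j = (r * of_bool (i = j) + c - adj E i j) / (r + x)" for i j
  have d: "r + x > 0" using assms by simp
  have sym: "P i j = P j i" for i j using srg_adj_sym[OF sr] by (auto simp: P_def adj_def)
  have idem: "(\<Sum>z\<in>UNIV. P i z * P z j) = P i j" for i j
    using srg_eigenprojection_idempotent[OF sr rx rmx, of i j] d
    by (simp add: P_def c_def sum_divide_distrib[symmetric] power2_eq_square)
  have off: "(P i j - (c - 1) / (r + x)) * (P i j - c / (r + x)) = 0" if "i \<noteq> j" for i j
    using that by (auto simp: P_def adj_def diff_divide_distrib)
  have diag: "(P i i - (c - 1) / (r + x)) * (P i i - c / (r + x)) \<noteq> 0" for i
  proof -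
    have "P i i - (c - 1) / (r + x) = (r + 1) / (r + x)" "P i i - c / (r + x) = r / (r + x)"
      using srg_not_adj_self[OF sr, of i] d by (simp_all add: P_def adj_def diff_divide_distrib[symmetric])
    thus ?thesis using d \<open>r > 0\<close> by simp
  qed
  have "(\<Sum>i\<in>UNIV. P i i) = real v * (r + c) / (r + x)"
    using sr srg_not_adj_self[OF sr] by (simp add: P_def adj_def strongly_regular_def)
  moreover have "real v * (r + c) = real k + (real v - 1) * r"
    using srg_degree_add_two_le_order[OF sr] by (simp add: c_def field_simps)
  ultimately have "(\<Sum>i\<in>UNIV. P i i) = g" by (simp add: g_def)
  thus ?thesis using absolute_bound[OF sym idem off diag] sr by (simp add: strongly_regular_def)
qed

lemma sextic_bound_small_eigenvalue:
  fixes k v x :: real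
  assumes "k \<ge> 1" "x > 0" "x^2 \<le> 2 * k" "v \<le> k^2 + 1"
  shows "v * x^6 < 64 * k^6"
proof -
  have "x^6 \<le> (2 * k)^3"
    using assms(2,3) power_mono[of "x^2" "2 * k" 3] by (simp add: power_mult[symmetric])
  hence "v * x^6 \<le> (k^2 + 1) * (8 * k^3)"
    using assms by (intro mult_mono) auto
  also have "\<dots> < (8 * k^3) * (8 * k^3)"
  proof (rule mult_strict_right_mono)
    have "k^2 \<le> k^3" using assms(1) by (simp add: power_increasing)
    moreover have "1 \<le> k^3" using assms(1) by simp
    ultimately show "k^2 + 1 < 8 * k^3" by linarith
  qed (use assms(1) in simp)
  finally show ?thesis by (simp add: power_add[symmetric])
qed

lemma sextic_bound_large_order:
  fixes k v x g :: real
  assumes "k \<ge> 1" "x > 0" "v > 0" "g > 0"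
    and "x * v < 4 * k^2" "v \<le> 4 * g^2" "g * x^2 \<le> v * k"
  shows "v * x^6 < 64 * k^6"
proof (cases "v^5 \<ge> 64 * k^6")
  case True
  have "(x * v)^6 < (4 * k^2)^6"
    using assms by (intro power_strict_mono) auto
  hence "v^5 * (v * x^6) < (64 * k^6) * (64 * k^6)"
    by (simp add: power_mult_distrib eval_nat_numeral algebra_simps)
  also have "\<dots> \<le> v^5 * (64 * k^6)"
    using True assms(1) by (intro mult_right_mono) auto
  finally show ?thesis using assms(3) by (simp add: mult_less_cancel_left)
next
  case False
  have "(g * x^2)^3 \<le> (v * k)^3"
    using assms by (intro power_mono) auto
  hence cubed: "g^3 * x^6 \<le> v^3 * k^3"
    by (simp add: power_mult_distrib power_mult[symmetric])
  have "(v * x^6)^2 * g^6 = v^2 * (g^3 * x^6)^2"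
    by (simp add: power_mult[symmetric] algebra_simps)
  also have "\<dots> \<le> v^2 * (v^3 * k^3)^2"
    using cubed assms(2,4) by (intro mult_left_mono power_mono) auto
  also have "\<dots> = v^3 * v^5 * k^6"
    by (simp add: power_mult[symmetric] algebra_simps)
  also have "\<dots> < v^3 * (64 * k^6) * k^6"
    using False assms by (intro mult_strict_right_mono mult_strict_left_mono) auto
  also have "\<dots> \<le> (4 * g^2)^3 * (64 * k^6) * k^6"
    using assms by (intro mult_right_mono power_mono) auto
  also have "\<dots> = (64 * k^6)^2 * g^6"
    by (simp add: power_mult[symmetric] algebra_simps)
  finally have "(v * x^6)^2 < (64 * k^6)^2"
    using assms(4) by (simp add: mult_less_cancel_right)
  thus ?thesis by (rule power_less_imp_less_base) (use assms(1) in auto)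
qed

lemma sextic_bound_small_order:
  fixes k v x g :: real
  assumes "x > 0" "x \<le> k" "g \<ge> 0" "v \<le> (g + 1)^2" "g * x^2 < 7 * k^2"
  shows "v * x^6 < 64 * k^6"
proof -
  have "x^2 \<le> k^2" using assms(1,2) by (intro power_mono) auto
  hence "(g + 1) * x^2 < 8 * k^2" using assms(5) by (simp add: algebra_simps)
  hence "((g + 1) * x^2)^2 < (8 * k^2)^2"
    using assms(1,3) by (intro power_strict_mono) auto
  moreover have "v * x^4 \<le> (g + 1)^2 * x^4" using assms(4) by (simp add: mult_right_mono)
  ultimately have "v * x^4 < 64 * k^4"
    by (simp add: power_mult_distrib power_mult[symmetric])
  hence "v * x^4 * x^2 < 64 * k^4 * x^2" using assms(1) by simp
  also have "\<dots> \<le> 64 * k^4 * k^2" using assms(1,2) by (intro mult_left_mono power_mono) auto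
  finally show ?thesis by (simp add: power_add[symmetric] algebra_simps)
qed

lemma srg_order_le_moore:
  fixes k l m v :: real
  assumes "k \<ge> 1" "m \<ge> 1" "l \<ge> 0" "v \<ge> k + 1"
    and count: "k^2 = k + l * k + m * (v - 1 - k)"
  shows "v \<le> k^2 + 1"
proof -
  have "1 * (v - 1 - k) \<le> m * (v - 1 - k)" using assms by (intro mult_right_mono) auto
  also have "\<dots> = k * (k - 1 - l)" using count by (simp add: algebra_simps power2_eq_square)
  also have "\<dots> \<le> k * (k - 1)" using assms by (simp add: mult_left_mono)
  finally show ?thesis by (simp add: power2_eq_square algebra_simps)
qed

lemma srg_eigenvalue_range:
  fixes k l m v r x :: real
  assumes "k \<ge> 1" "m \<ge> 1" "l \<ge> 0" "v \<ge> k + 1" "r > 0"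
    and rx: "r * x = k - m" and rmx: "r - x = l - m"
    and count: "k^2 = k + l * k + m * (v - 1 - k)"
  shows "1 \<le> x" "x \<le> k"
proof -
  have "k * (k - 1 - l) = m * (v - 1 - k)" using count by (simp add: algebra_simps power2_eq_square)
  also have "\<dots> \<ge> 0" using assms by simp
  finally have "k * (k - 1 - l) \<ge> 0" .
  moreover have "k - 1 - l = (r + 1) * (x - 1)" using rx rmx by (simp add: algebra_simps)
  ultimately have "(r + 1) * (x - 1) \<ge> 0" using assms(1) by (simp add: zero_le_mult_iff)
  thus x1: "1 \<le> x" using assms(5) by (simp add: zero_le_mult_iff)
  have "x - k \<le> r * (1 - x)" using assms rx rmx by (simp add: algebra_simps)
  also have "\<dots> \<le> 0" using assms(5) x1 by (simp add: mult_nonneg_nonpos)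
  finally show "x \<le> k" by simp
qed

lemma srg_multiplicity_mul_square_le:
  fixes k l m v r x g :: real
  assumes "k \<ge> 1" "v \<ge> k + 1" "r > 0" "x \<ge> 1"
    and rx: "r * x = k - m" and rmx: "r - x = l - m"
    and count: "k^2 = k + l * k + m * (v - 1 - k)"
    and mult: "g * (r + x) = k + (v - 1) * r"
  shows "g * x^2 \<le> v * k"
proof -
  have "v * k - k^2 = (v - 1) * (r * x) + k * (x - r)"
    using count rx rmx by algebra
  hence identity: "(r + x) * (v * k - k^2) = ((v - 1) * x - k) * r^2 + (k + (v - 1) * r) * x^2"
    by algebra
  have "(v - 1) * x \<ge> k * 1" using assms by (intro mult_mono) auto
  hence "0 \<le> ((v - 1) * x - k) * r^2" by simp
  moreover have "g * x^2 * (r + x) = (k + (v - 1) * r) * x^2"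
    using mult by (metis mult.commute mult.left_commute)
  ultimately have "g * x^2 * (r + x) \<le> (r + x) * (v * k - k^2)"
    using identity by linarith
  also have "\<dots> \<le> (r + x) * (v * k)" by (intro mult_left_mono) (use assms(3,4) in auto)
  finally show ?thesis using assms by (simp add: mult.commute mult_le_cancel_left)
qed

lemma srg_order_bound_large_eigenvalue:
  fixes k l m v r x :: real
  assumes "k \<ge> 1" "m \<ge> 1" "l \<ge> 0" "r > 0" "x \<ge> 1" "x^2 > 2 * k"
    and rx: "r * x = k - m" and rmx: "r - x = l - m"
    and count: "k^2 = k + l * k + m * (v - 1 - k)"
  shows "r < x / 2" "v - 1 - k < 2 * k * (r + 1)"
proof -
  have "r * x < x * x / 2" using rx assms(2,6) by (simp add: power2_eq_square)
  thus r: "r < x / 2" using assms(5) by (simp add: mult.commute)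
  have kl: "k - 1 - l = (r + 1) * (x - 1)" using rx rmx by (simp add: algebra_simps)
  have "m * (v - 1 - k) = k * (k - 1 - l)" using count by (simp add: algebra_simps power2_eq_square)
  also have "\<dots> = k * (r + 1) * (x - 1)" using kl by simp
  also have "\<dots> < k * (r + 1) * x" using assms by simp
  also have "\<dots> \<le> k * (r + 1) * (2 * m)"
    using assms r rmx by (intro mult_left_mono) auto
  finally have "m * (v - 1 - k) < m * (2 * k * (r + 1))" by (simp add: algebra_simps)
  thus "v - 1 - k < 2 * k * (r + 1)" using assms(2) by simp
qed

lemma srg_eigenvalue_sextic_bound:
  fixes k l m v r x g :: real
  assumes "k \<ge> 1" "m \<ge> 1" "l \<ge> 0" "v \<ge> k + 2" "r > 0"
    and rx: "r * x = k - m" and rmx: "r - x = l - m"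
    and count: "k^2 = k + l * k + m * (v - 1 - k)"
    and mult: "g * (r + x) = k + (v - 1) * r"
    and absolute: "v \<le> g^2 + g + 1"
  shows "v * x^6 < 64 * k^6"
proof -
  have x: "1 \<le> x" "x \<le> k" using srg_eigenvalue_range[OF assms(1-3) _ assms(5-8)] assms(4) by auto
  have "1 * r \<le> (v - 1) * r" using assms by (intro mult_right_mono) auto
  hence "1 * (r + x) \<le> g * (r + x)" using x mult by simp
  hence g: "g \<ge> 1" using assms(5) x by (simp add: mult_le_cancel_right)
  have vg: "v \<le> (g + 1)^2" using absolute g by (simp add: power2_eq_square algebra_simps)
  show ?thesis
  proof (cases "x^2 \<le> 2 * k")
    case True
    with x show ?thesis
      using sextic_bound_small_eigenvalue srg_order_le_moore assms(1-4) count by force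
  next
    case False
    hence r: "r < x / 2" and v: "v - 1 - k < 2 * k * (r + 1)"
      using srg_order_bound_large_eigenvalue[OF assms(1-3,5) x(1) _ rx rmx count] by auto
    have rxk: "r * x \<le> k - 1" using rx assms(2) by simp
    show ?thesis
    proof (cases "v \<ge> 6 * k + 2")
      case True
      have "x * (v / 2) \<le> x * (v - 3 * k - 1)" using True x by (intro mult_left_mono) auto
      also have "\<dots> < x * (2 * k * r)" using v x by (intro mult_strict_left_mono) (auto simp: algebra_simps)
      also have "\<dots> = 2 * k * (r * x)" by simp
      also have "\<dots> \<le> 2 * k * k" using rxk assms(1) by (intro mult_left_mono) auto
      finally have "x * v < 4 * k^2" by (simp add: power2_eq_square)
      moreover have "v \<le> 4 * g^2"
        using vg power_mono[of "g + 1" "2 * g" 2] g by simp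
      ultimately show ?thesis
        using sextic_bound_large_order[of k x v g] srg_multiplicity_mul_square_le[OF assms(1) _ assms(5) x(1) rx rmx count mult]
          assms(1,4) x g by auto
    next
      case False
      have "g * x < g * (r + x)" using g assms(5) by simp
      also have "\<dots> \<le> k + (6 * k + 1) * r" using mult False assms(5) by (simp add: mult_right_mono)
      finally have "g * x * x < (k + (6 * k + 1) * r) * x" using x by (intro mult_strict_right_mono) auto
      also have "\<dots> = k * x + (6 * k + 1) * (r * x)" by (simp add: algebra_simps)
      also have "\<dots> \<le> k * k + (6 * k + 1) * (k - 1)"
        using rxk assms(1) x by (intro add_mono mult_left_mono) auto
      finally have "g * x^2 < 7 * k^2" using assms(1) by (simp add: power2_eq_square algebra_simps)
      thus ?thesis using sextic_bound_small_order[of x k g v] x g vg by auto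
    qed
  qed
qed

lemma powr_inverse_less:
  fixes a b :: real
  assumes "0 \<le> a" "0 < b" "a < b ^ n" "0 < n"
  shows "a powr (1 / real n) < b"
proof (cases "a = 0")
  case False
  hence "a powr (1 / real n) = root n a" using assms by (simp add: root_powr_inverse)
  also have "\<dots> < root n (b ^ n)" using assms by (simp add: real_root_less_iff)
  also have "\<dots> = b" using assms by (simp add: real_root_pos2)
  finally show ?thesis .
qed (use assms in simp)

theorem lemma1p5:
  fixes E :: "'n::finite \<Rightarrow> 'n \<Rightarrow> bool" and v k l m :: nat and s :: real
  assumes "primitive_srg E v k l m"
    and "smallest_eigenvalue (adj_matrix E) s"
  shows "real k / \<bar>s\<bar> > real v powr (1/6) / 2"
proof -
  have sr: "strongly_regular E v k l m" using assms(1) by (simp add: primitive_srg_def)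
  obtain r where r: "r > 0" "s < 0" "r * s = real m - real k" "r + s = real l - real m"
    using primitive_srg_smallest_eigenvalue[OF assms] .
  define x where "x = - s"
  have x: "x > 0" "r * x = real k - real m" "r - x = real l - real m"
    using r by (auto simp: x_def algebra_simps)
  define g where "g = (real k + (real v - 1) * r) / (r + x)"
  have "g * (r + x) = real k + (real v - 1) * r" using r x by (simp add: g_def)
  moreover have "real v \<le> g^2 + g + 1"
    unfolding g_def by (rule srg_eigenvalue_absolute_bound[OF sr r(1) x])
  moreover have "real k \<ge> 1" "real m \<ge> 1" "real v \<ge> real k + 2"
    using srg_degree_pos[OF sr] primitive_srg_mu_pos[OF assms(1)] srg_degree_add_two_le_order[OF sr]
    by auto
  ultimately have "real v * x^6 < 64 * real k^6"
    using srg_eigenvalue_sextic_bound[OF _ _ _ _ r(1) x(2,3) srg_parameter_identity[OF sr]] by simp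
  hence "real v < (2 * real k / x)^6" using x by (simp add: field_simps)
  hence "real v powr (1 / real 6) < 2 * real k / x"
    using x \<open>real k \<ge> 1\<close> by (intro powr_inverse_less) auto
  thus ?thesis using r by (simp add: x_def field_simps)
qed

end
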